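(* Fix $\mu,\nu$ with $\mu>-3$ and $|\nu|<\mu+3$, and fix $x>0$. Then the function $\delta\mapsto \tilde{t}_{\mu+\delta+1,\nu+\delta+1}(x)/\tilde{t}_{\mu+\delta,\nu+\delta}(x)$ is strictly decreasing on $(0,\infty)$.
   Context: For real $\mu,\nu$ the (normalized) modified Lommel function of the first kind is $$\tilde{t}_{\mu,\nu}(x)=\sum_{k=0}^\infty\frac{(\frac{1}{2}x)^{\mu+2k+1}}{\Gamma\big(k+\frac{\mu-\nu+3}{2}\big)\Gamma\big(k+\frac{\mu+\nu+3}{2}\big)},\quad x>0.$$ *)

theory Defs
  imports "HOL-Analysis.Analysis"
begin

definition lommel_t :: "real \<Rightarrow> real \<Rightarrow> real \<Rightarrow> real" where
  "lommel_t \<mu> \<nu> x =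
     (\<Sum>k. (x / 2) powr (\<mu> + 2 * real k + 1) /
           (Gamma (real k + (\<mu> - \<nu> + 3) / 2) * Gamma (real k + (\<mu> + \<nu> + 3) / 2)))"

end

theory Submission
  imports Defs
begin

(* With a = (mu - nu + 3)/2, b = (mu + nu + 3)/2 and y = x^2/4 one has
   t_{mu+d,nu+d}(x) = (x/2)^(mu+d+1) F(a, b+d; y), where F(a,b;y) = sum_k y^k / (Gamma(k+a) Gamma(k+b)).
   Hence the ratio is (x/2) F(a,b+d+1;y) / F(a,b+d;y), and it suffices to show
   F(a,t+1) F(a,s) < F(a,s+1) F(a,t) for 0 < s < t.  Weighting by the terms w_k of F(a,s),
   this is Chebyshev's sum inequality for the decreasing sequence Gamma(k+s)/Gamma(k+t) and the
   increasing sequence k - 1 + a produced by the index shift in F(a,s+1). *)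

lemma suminf_less_suminf:
  fixes f g :: "nat \<Rightarrow> real"
  assumes "summable f" "summable g" "\<And>n. f n \<le> g n" "f i < g i"
  shows "suminf f < suminf g"
proof -
  have "0 < (\<Sum>n. g n - f n)"
    using assms by (intro suminf_pos2[where i = i] summable_diff) auto
  then show ?thesis
    using suminf_diff[OF assms(2,1)] by simp
qed

lemma weighted_mean_bounds:
  fixes w r :: "nat \<Rightarrow> real"
  assumes w_pos: "\<And>i. w i > 0" and sw: "summable w" and swr: "summable (\<lambda>i. w i * r i)"
    and r_dec: "\<And>i. r (Suc i) < r i"
  defines "\<rho> \<equiv> (\<Sum>i. w i * r i) / (\<Sum>i. w i)"
  shows "\<rho> < r 0" and "\<exists>k. r k < \<rho>"
proof -
  have B_pos: "(\<Sum>i. w i) > 0"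
    using suminf_pos[OF sw w_pos] .
  have "(\<Sum>i. w i * \<rho>) = (\<Sum>i. w i) * \<rho>"
    by (rule suminf_mult2[OF sw, symmetric])
  also have "\<dots> = (\<Sum>i. w i * r i)"
    using B_pos by (simp add: \<rho>_def)
  finally have E_eq: "(\<Sum>i. w i * r i) = (\<Sum>i. w i * \<rho>)" ..
  have "(\<Sum>i. w i * r i) < (\<Sum>i. w i * r 0)"
  proof (rule suminf_less_suminf[where i = 1])
    show "w i * r i \<le> w i * r 0" for i
      using lift_Suc_antimono_le[of r, OF less_imp_le[OF r_dec], of 0 i] w_pos[of i] by simp
  qed (use swr summable_mult2[OF sw] w_pos[of 1] r_dec[of 0] in auto)
  then show r0: "\<rho> < r 0"
    unfolding E_eq using B_pos by (simp add: suminf_mult2[OF sw, symmetric])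
  show "\<exists>k. r k < \<rho>"
  proof (rule ccontr)
    assume "\<not> (\<exists>k. r k < \<rho>)"
    then have "(\<Sum>i. w i * \<rho>) < (\<Sum>i. w i * r i)"
      using swr summable_mult2[OF sw] w_pos r0
      by (intro suminf_less_suminf[where i = 0]) (auto simp: not_less)
    then show False
      using E_eq by simp
  qed
qed

lemma chebyshev_suminf_strict:
  fixes w p r :: "nat \<Rightarrow> real"
  assumes w_pos: "\<And>i. w i > 0" and sw: "summable w" and swr: "summable (\<lambda>i. w i * r i)"
    and swp: "summable (\<lambda>i. w i * p i)" and swpr: "summable (\<lambda>i. w i * p i * r i)"
    and r_dec: "\<And>i. r (Suc i) < r i" and p_inc: "incseq p" and p_nonconst: "p 0 < p n"
  shows "(\<Sum>i. w i * p i * r i) * (\<Sum>i. w i) < (\<Sum>i. w i * p i) * (\<Sum>i. w i * r i)"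
proof -
  define A B C E where "A = (\<Sum>i. w i * p i * r i)" and "B = (\<Sum>i. w i)"
    and "C = (\<Sum>i. w i * p i)" and "E = (\<Sum>i. w i * r i)"
  define \<rho> where "\<rho> = E / B"
  have B_pos: "B > 0"
    unfolding B_def using suminf_pos[OF sw w_pos] .
  have E_eq: "E = \<rho> * B"
    using B_pos by (simp add: \<rho>_def)
  have \<rho>_lt_r0: "\<rho> < r 0" and "\<exists>k. r k < \<rho>"
    using weighted_mean_bounds[OF w_pos sw swr r_dec] by (simp_all add: \<rho>_def B_def E_def)
  define m where "m = (LEAST k. r k < \<rho>)"
  have below: "r i < \<rho> \<longleftrightarrow> m \<le> i" for i
  proof
    show "r i < \<rho> \<Longrightarrow> m \<le> i"
      unfolding m_def by (rule Least_le)
    have "r m < \<rho>"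
      unfolding m_def by (rule LeastI_ex) fact
    then show "m \<le> i \<Longrightarrow> r i < \<rho>"
      using lift_Suc_antimono_le[of r, OF less_imp_le[OF r_dec], of m i] by simp
  qed
  \<comment> \<open>\<open>m\<close> is where \<open>r\<close> drops below its weighted mean, so every term of
      \<open>\<Sum>i. w i * (p i - p m) * (r i - \<rho>)\<close> is \<open>\<le> 0\<close>, and that series sums to \<open>A - \<rho> * C\<close>.\<close>
  have sign: "(p i - p m) * (r i - \<rho>) \<le> 0" for i
    using below[of i] incseqD[OF p_inc, of i m] incseqD[OF p_inc, of m i]
    by (cases "m \<le> i") (auto simp: mult_le_0_iff)
  have "\<exists>j. (p j - p m) * (r j - \<rho>) < 0"
  proof (cases "p 0 < p m")
    case True
    then show ?thesis
      using \<rho>_lt_r0 by (intro exI[of _ 0]) (simp add: mult_less_0_iff)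
  next
    case False
    then have "p m < p n"
      using p_nonconst incseqD[OF p_inc, of 0 m] by simp
    then have "m \<le> n"
      using incseqD[OF p_inc, of n m] by (cases "m \<le> n") auto
    then show ?thesis
      using below[of n] \<open>p m < p n\<close> by (intro exI[of _ n]) (simp add: mult_less_0_iff)
  qed
  then obtain j where "(p j - p m) * (r j - \<rho>) < 0" ..
  have expand: "w i * ((p i - p m) * (r i - \<rho>))
      = w i * p i * r i - \<rho> * (w i * p i) - p m * (w i * r i) + p m * \<rho> * w i" for i
    by (simp add: algebra_simps)
  have sums: "(\<lambda>i. w i * ((p i - p m) * (r i - \<rho>))) sums (A - \<rho> * C - p m * E + p m * \<rho> * B)"
    unfolding expand A_def B_def C_def E_def
    by (intro sums_add sums_diff sums_mult summable_sums swpr swp swr sw)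
  have "(\<Sum>i. w i * ((p i - p m) * (r i - \<rho>))) < (\<Sum>i. 0)"
  proof (rule suminf_less_suminf[where i = j])
    show "w i * ((p i - p m) * (r i - \<rho>)) \<le> 0" for i
      using w_pos[of i] sign[of i] by (simp add: mult_nonneg_nonpos)
    show "w j * ((p j - p m) * (r j - \<rho>)) < 0"
      using w_pos[of j] \<open>(p j - p m) * (r j - \<rho>) < 0\<close> by (simp add: mult_pos_neg)
  qed (use sums_summable[OF sums] in auto)
  then have "A - \<rho> * C < 0"
    using sums_unique[OF sums] E_eq by (simp add: algebra_simps)
  then show ?thesis
    using B_pos E_eq by (simp flip: A_def B_def C_def E_def) (simp add: algebra_simps)
qed

lemma Gamma_real_plus1: "x > 0 \<Longrightarrow> Gamma (x + 1) = x * Gamma (x :: real)"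
  by (rule Gamma_plus1) (auto dest: nonpos_Ints_nonpos)

definition hyp0F2_term :: "real \<Rightarrow> real \<Rightarrow> real \<Rightarrow> nat \<Rightarrow> real" where
  "hyp0F2_term a b y k = y ^ k / (Gamma (real k + a) * Gamma (real k + b))"

lemma hyp0F2_term_pos: "a > 0 \<Longrightarrow> b > 0 \<Longrightarrow> y > 0 \<Longrightarrow> hyp0F2_term a b y k > 0"
  unfolding hyp0F2_term_def by simp

lemma hyp0F2_term_Suc:
  assumes "a > 0" "b > 0"
  shows "hyp0F2_term a b y (Suc k) = hyp0F2_term a b y k * y / ((real k + a) * (real k + b))"
  using assms Gamma_real_plus1[of "real k + a"] Gamma_real_plus1[of "real k + b"]
  by (simp add: hyp0F2_term_def add_ac mult_ac)

lemma hyp0F2_term_Suc_eq_param_shift: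
  assumes "a > 0"
  shows "(real k + a) * hyp0F2_term a b y (Suc k) = y * hyp0F2_term a (b + 1) y k"
  using assms Gamma_real_plus1[of "real k + a"]
  by (simp add: hyp0F2_term_def add_ac)

lemma hyp0F2_term_mult_Gamma_quotient:
  assumes "b > 0"
  shows "hyp0F2_term a b y k * (Gamma (real k + b) / Gamma (real k + c)) = hyp0F2_term a c y k"
proof -
  have "Gamma (real k + b) > 0"
    by (rule Gamma_real_pos) (use assms in simp)
  then show ?thesis
    by (simp add: hyp0F2_term_def)
qed

lemma summable_hyp0F2_term:
  assumes a: "a > 0" and b: "b > 0"
  shows "summable (hyp0F2_term a b y)"
proof (rule summable_ratio_test[where c = "1/2" and N = "nat \<lceil>2 * \<bar>y\<bar>\<rceil> + 1"])
  fix n assume "n \<ge> nat \<lceil>2 * \<bar>y\<bar>\<rceil> + 1"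
  then have "2 * \<bar>y\<bar> \<le> real n" and "1 \<le> real n"
    by linarith+
  then have "2 * \<bar>y\<bar> \<le> real n * real n"
    using mult_right_mono[of 1 "real n" "real n"] by linarith
  also have "\<dots> \<le> (real n + a) * (real n + b)"
    using a b by (intro mult_mono) auto
  finally have "\<bar>y / ((real n + a) * (real n + b))\<bar> \<le> 1/2"
    using a b by (simp add: abs_divide divide_le_eq)
  then have "norm (hyp0F2_term a b y n) * \<bar>y / ((real n + a) * (real n + b))\<bar>
      \<le> norm (hyp0F2_term a b y n) * (1/2)"
    by (rule mult_left_mono) simp
  then show "norm (hyp0F2_term a b y (Suc n)) \<le> 1/2 * norm (hyp0F2_term a b y n)"
    by (simp add: hyp0F2_term_Suc[OF a b] abs_mult mult_ac)
qed simp

definition hyp0F2 :: "real \<Rightarrow> real \<Rightarrow> real \<Rightarrow> real" where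
  "hyp0F2 a b y = (\<Sum>k. hyp0F2_term a b y k)"

lemma hyp0F2_pos: "a > 0 \<Longrightarrow> b > 0 \<Longrightarrow> y > 0 \<Longrightarrow> hyp0F2 a b y > 0"
  unfolding hyp0F2_def by (intro suminf_pos summable_hyp0F2_term hyp0F2_term_pos)

lemma hyp0F2_sums_shifted_weights:
  assumes "a > 0" "b > 0"
  shows "(\<lambda>k. hyp0F2_term a b y k * (case k of 0 \<Rightarrow> 0 | Suc j \<Rightarrow> real j + a))
           sums (y * hyp0F2 a (b + 1) y)"
proof -
  let ?f = "\<lambda>k. hyp0F2_term a b y k * (case k of 0 \<Rightarrow> 0 | Suc j \<Rightarrow> real j + a)"
  have "(\<lambda>j. y * hyp0F2_term a (b + 1) y j) sums (y * hyp0F2 a (b + 1) y)"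
    unfolding hyp0F2_def using assms by (intro sums_mult summable_sums summable_hyp0F2_term) auto
  moreover have "?f (Suc j) = y * hyp0F2_term a (b + 1) y j" for j
    using hyp0F2_term_Suc_eq_param_shift[OF assms(1), of j b y] by (simp add: mult.commute)
  ultimately have "(\<lambda>j. ?f (Suc j)) sums (y * hyp0F2 a (b + 1) y)"
    by simp
  from sums_Suc_iff[of ?f, THEN iffD1, OF this] show ?thesis
    by simp
qed

lemma Gamma_quotient_Suc_less:
  fixes s t :: real
  assumes "0 < s" "s < t"
  shows "Gamma (real (Suc n) + s) / Gamma (real (Suc n) + t) < Gamma (real n + s) / Gamma (real n + t)"
proof -
  have "Gamma (real (Suc n) + s) / Gamma (real (Suc n) + t)
      = Gamma (real n + s) / Gamma (real n + t) * ((real n + s) / (real n + t))"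
    using assms Gamma_real_plus1[of "real n + s"] Gamma_real_plus1[of "real n + t"]
    by (simp add: add_ac mult_ac)
  also have "\<dots> < Gamma (real n + s) / Gamma (real n + t) * 1"
    using assms by (intro mult_strict_left_mono) simp_all
  finally show ?thesis
    by simp
qed

lemma hyp0F2_succ_ratio_less:
  assumes a: "a > 0" and s: "0 < s" "s < t" and y: "y > 0"
  shows "hyp0F2 a (t + 1) y / hyp0F2 a t y < hyp0F2 a (s + 1) y / hyp0F2 a s y"
proof -
  have t: "t > 0"
    using s by simp
  define w where "w = hyp0F2_term a s y"
  define r where "r k = Gamma (real k + s) / Gamma (real k + t)" for k
  \<comment> \<open>\<open>p 0 = 0\<close> absorbs the index shift: \<open>w (Suc k) * p (Suc k)\<close> is \<open>y\<close> times the
      \<open>k\<close>-th term of \<open>hyp0F2 a (s + 1) y\<close>.\<close>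
  define p :: "nat \<Rightarrow> real" where "p k = (case k of 0 \<Rightarrow> 0 | Suc j \<Rightarrow> real j + a)" for k
  have wr: "w k * r k = hyp0F2_term a t y k" for k
    unfolding w_def r_def using hyp0F2_term_mult_Gamma_quotient s by simp
  have sums_wp: "(\<lambda>k. w k * p k) sums (y * hyp0F2 a (s + 1) y)"
    unfolding w_def p_def using hyp0F2_sums_shifted_weights[OF a s(1)] .
  have "(\<lambda>k. hyp0F2_term a t y k * p k) sums (y * hyp0F2 a (t + 1) y)"
    unfolding p_def by (rule hyp0F2_sums_shifted_weights[OF a t])
  then have sums_wpr: "(\<lambda>k. w k * p k * r k) sums (y * hyp0F2 a (t + 1) y)"
    by (simp add: wr[symmetric] mult_ac)
  have w_pos: "w k > 0" for k
    unfolding w_def by (rule hyp0F2_term_pos[OF a s(1) y])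
  have sw: "summable w"
    unfolding w_def by (rule summable_hyp0F2_term[OF a s(1)])
  have swr: "summable (\<lambda>k. w k * r k)"
    unfolding wr by (rule summable_hyp0F2_term[OF a t])
  have r_dec: "r (Suc k) < r k" for k
    unfolding r_def by (rule Gamma_quotient_Suc_less[OF s])
  have "incseq p" and "p 0 < p 1"
    using a by (auto simp: p_def incseq_SucI split: nat.split)
  from chebyshev_suminf_strict[OF w_pos sw swr sums_summable[OF sums_wp] sums_summable[OF sums_wpr]
      r_dec this]
  have "(\<Sum>k. w k * p k * r k) * (\<Sum>k. w k) < (\<Sum>k. w k * p k) * (\<Sum>k. w k * r k)" .
  moreover have "(\<Sum>k. w k) = hyp0F2 a s y" and "(\<Sum>k. w k * r k) = hyp0F2 a t y"
    unfolding hyp0F2_def w_def[symmetric] wr by simp_all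
  ultimately have "y * hyp0F2 a (t + 1) y * hyp0F2 a s y < y * hyp0F2 a (s + 1) y * hyp0F2 a t y"
    unfolding sums_unique[OF sums_wp, symmetric] sums_unique[OF sums_wpr, symmetric] by simp
  then show ?thesis
    using hyp0F2_pos[OF a s(1) y] hyp0F2_pos[OF a t y] y by (simp add: divide_simps mult_ac)
qed

lemma lommel_t_eq_hyp0F2:
  assumes "\<bar>\<nu>\<bar> < \<mu> + 3" "x > 0"
  shows "lommel_t \<mu> \<nu> x
    = (x / 2) powr (\<mu> + 1) * hyp0F2 ((\<mu> - \<nu> + 3) / 2) ((\<mu> + \<nu> + 3) / 2) ((x / 2)\<^sup>2)"
proof -
  have term_eq: "(x / 2) powr (\<mu> + 2 * real k + 1) /
        (Gamma (real k + (\<mu> - \<nu> + 3) / 2) * Gamma (real k + (\<mu> + \<nu> + 3) / 2))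
      = (x / 2) powr (\<mu> + 1) * hyp0F2_term ((\<mu> - \<nu> + 3) / 2) ((\<mu> + \<nu> + 3) / 2) ((x / 2)\<^sup>2) k" for k
  proof -
    have "(x / 2) powr (\<mu> + 2 * real k + 1) = (x / 2) powr (\<mu> + 1) * (x / 2) powr real (2 * k)"
      by (simp add: powr_add[symmetric] algebra_simps)
    also have "(x / 2) powr real (2 * k) = ((x / 2)\<^sup>2) ^ k"
      by (subst powr_realpow) (use assms(2) in \<open>simp_all add: power_mult\<close>)
    finally show ?thesis
      by (simp add: hyp0F2_term_def)
  qed
  show ?thesis
    unfolding lommel_t_def term_eq hyp0F2_def
    using assms(1) by (intro suminf_mult summable_hyp0F2_term) (auto simp: abs_less_iff)
qed

lemma lommel_t_succ_ratio:
  assumes "\<bar>\<nu>\<bar> < \<mu> + 3" "x > 0"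
  defines "a \<equiv> (\<mu> - \<nu> + 3) / 2" and "b \<equiv> (\<mu> + \<nu> + 3) / 2" and "y \<equiv> (x / 2)\<^sup>2"
  shows "lommel_t (\<mu> + 1) (\<nu> + 1) x / lommel_t \<mu> \<nu> x = x / 2 * (hyp0F2 a (b + 1) y / hyp0F2 a b y)"
proof -
  have base: "lommel_t \<mu> \<nu> x = (x / 2) powr (\<mu> + 1) * hyp0F2 a b y"
    unfolding a_def b_def y_def by (rule lommel_t_eq_hyp0F2[OF assms(1,2)])
  have bound: "\<bar>\<nu> + 1\<bar> < \<mu> + 1 + 3"
    using assms(1) by linarith
  have params: "(\<mu> + 1 - (\<nu> + 1) + 3) / 2 = a" "(\<mu> + 1 + (\<nu> + 1) + 3) / 2 = b + 1"
    by (simp_all add: a_def b_def field_simps)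
  have power: "(x / 2) powr (\<mu> + 1 + 1) = x / 2 * (x / 2) powr (\<mu> + 1)"
    using assms(2) powr_add[of "x / 2" "\<mu> + 1" 1] by (simp add: mult.commute)
  have succ: "lommel_t (\<mu> + 1) (\<nu> + 1) x = x / 2 * (x / 2) powr (\<mu> + 1) * hyp0F2 a (b + 1) y"
    using lommel_t_eq_hyp0F2[OF bound assms(2)] unfolding params power y_def .
  have "hyp0F2 a b y > 0"
    using assms by (intro hyp0F2_pos) (auto simp: a_def b_def y_def abs_less_iff)
  then show ?thesis
    unfolding succ base using assms(2) by simp
qed

theorem theorem3p2:
  fixes \<mu> \<nu> x :: real
  assumes "\<mu> > -3" and "\<bar>\<nu>\<bar> < \<mu> + 3" and "x > 0"
  shows "\<forall>d1 d2. 0 < d1 \<and> d1 < d2 \<longrightarrow>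
           lommel_t (\<mu> + d2 + 1) (\<nu> + d2 + 1) x / lommel_t (\<mu> + d2) (\<nu> + d2) x
         < lommel_t (\<mu> + d1 + 1) (\<nu> + d1 + 1) x / lommel_t (\<mu> + d1) (\<nu> + d1) x"
proof (intro allI impI)
  fix d1 d2 :: real
  assume "0 < d1 \<and> d1 < d2"
  then have d1: "0 < d1" and d12: "d1 < d2"
    by auto
  define a b y where "a = (\<mu> - \<nu> + 3) / 2" and "b = (\<mu> + \<nu> + 3) / 2" and "y = (x / 2)\<^sup>2"
  have ratio: "lommel_t (\<mu> + d + 1) (\<nu> + d + 1) x / lommel_t (\<mu> + d) (\<nu> + d) x
      = x / 2 * (hyp0F2 a (b + d + 1) y / hyp0F2 a (b + d) y)" if "d > 0" for d
  proof -
    have bound: "\<bar>\<nu> + d\<bar> < \<mu> + d + 3"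
      using assms(2) that by linarith
    have params: "(\<mu> + d - (\<nu> + d) + 3) / 2 = a" "(\<mu> + d + (\<nu> + d) + 3) / 2 = b + d"
      by (simp_all add: a_def b_def field_simps)
    show ?thesis
      using lommel_t_succ_ratio[OF bound assms(3)] unfolding params y_def .
  qed
  have "a > 0" "b > 0" "y > 0"
    using assms(2,3) by (auto simp: a_def b_def y_def abs_less_iff)
  then have "hyp0F2 a (b + d2 + 1) y / hyp0F2 a (b + d2) y < hyp0F2 a (b + d1 + 1) y / hyp0F2 a (b + d1) y"
    using hyp0F2_succ_ratio_less[of a "b + d1" "b + d2" y] d1 d12 by (simp add: add.assoc)
  then have "x / 2 * (hyp0F2 a (b + d2 + 1) y / hyp0F2 a (b + d2) y)
      < x / 2 * (hyp0F2 a (b + d1 + 1) y / hyp0F2 a (b + d1) y)"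
    by (rule mult_strict_left_mono) (use assms(3) in simp)
  then show "lommel_t (\<mu> + d2 + 1) (\<nu> + d2 + 1) x / lommel_t (\<mu> + d2) (\<nu> + d2) x
         < lommel_t (\<mu> + d1 + 1) (\<nu> + d1 + 1) x / lommel_t (\<mu> + d1) (\<nu> + d1) x"
    unfolding ratio[OF d1] ratio[OF order.strict_trans[OF d1 d12]] .
qed

end
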